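(* Let $g\in\mathbb{R}^n$, $\Delta>0$, and $B\in\mathbb{R}^{n\times n}$ (not necessarily symmetric) be positive semidefinite in the sense $h^TBh\ge0$ for all $h\in\mathbb{R}^n$, and let $m(s)=c+\langle g,s\rangle+\frac12\langle s,Bs\rangle$ for a constant $c$. Suppose $t\ge0$ and constants $\lambda_1,\lambda_2>0$ satisfy $\frac12h^TBh+t\|h\|^2\ge\lambda_1\|h\|^2$ for all $h\in\mathbb{R}^n$ and $\|B+tI\|\le\lambda_2$. Let $p\in\mathbb{R}^n$ satisfy $(B+tI)p=-g+r$ with $\|r\|\le\frac{\lambda_1}{2(\lambda_1+\lambda_2)}\|g\|$, and set $s=\min\{\Delta,\|p\|\}\,p/\|p\|$. Then $$m(0)-m(s)\ge\frac{\gamma_1}{2}\|g\|\min\{\Delta,\gamma_2\|g\|\}\quad\text{with }\gamma_1=\frac{\lambda_1}{2\lambda_2},\ \gamma_2=\frac{\lambda_1+2\lambda_2}{2\lambda_2(\lambda_1+\lambda_2)}.$$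
   Context: $\|\cdot\|$ denotes the Euclidean norm on vectors; the matrix norm bound $\|B+tI\|\le\lambda_2$ is used as a bound on the operator norm $\max_{h\ne0}\|(B+tI)h\|/\|h\|$ (the Frobenius norm bounds it from above). *)

theory Defs
  imports "HOL-Analysis.Analysis"
begin

definition qmodel :: "real \<Rightarrow> real^'n \<Rightarrow> real^'n^'n \<Rightarrow> real^'n \<Rightarrow> real" where
  "qmodel c g B s = c + g \<bullet> s + (1/2) * (s \<bullet> (B *v s))"

end

theory Submission
  imports Defs
begin

text \<open>
  Write A = B + tI, P = norm p, G = norm g, R = norm r and s = a p with a = min \<Delta> P / P in [0,1].
  Testing A p = -g + r against p gives -<g,p> = <p,Bp> + t P^2 - <r,p>; with a^2 \<le> a and
  <p,Bp> \<ge> 0 the decrease of the model along a p is at least a (lam1 P^2 - R P), which is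
  min \<Delta> P (lam1 P - R).  On the other hand G \<le> lam2 P + R and R \<le> lam1 G / (2 (lam1 + lam2))
  force P \<ge> gamma2 G, and since lam1 gamma2 = gamma1 + lam1 / (2 (lam1 + lam2)) this gives
  lam1 P - R \<ge> gamma1 G; so the decrease is even gamma1 G min \<Delta> (gamma2 G).
\<close>

lemma regularized_matrix_vector_mult:
  fixes B :: "real^'n^'n"
  shows "(B + t *\<^sub>R mat 1) *v h = B *v h + t *\<^sub>R h"
  by (simp add: matrix_vector_mult_add_rdistrib flip: scaleR_matrix_vector_assoc)

lemma norm_matrix_vector_le_onorm:
  fixes A :: "real^'n^'m"
  assumes "onorm (\<lambda>h. A *v h) \<le> L"
  shows "norm (A *v x) \<le> L * norm x"
proof -
  have "bounded_linear (\<lambda>h. A *v h)"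
    by (simp add: linear_conv_bounded_linear matrix_vector_mul_linear)
  then have "norm (A *v x) \<le> onorm (\<lambda>h. A *v h) * norm x"
    by (rule onorm)
  also have "\<dots> \<le> L * norm x"
    using assms by (simp add: mult_right_mono)
  finally show ?thesis .
qed

lemma qmodel_decrease_scaled:
  "qmodel c g B 0 - qmodel c g B (a *\<^sub>R p) = - a * (g \<bullet> p) - a\<^sup>2 / 2 * (p \<bullet> (B *v p))"
proof -
  have "B *v (a *\<^sub>R p) = a *\<^sub>R (B *v p)"
    by (simp add: matrix_vector_mult_scaleR)
  then show ?thesis
    by (simp add: qmodel_def power2_eq_square algebra_simps)
qed

lemma inner_regularized_residual:
  fixes B :: "real^'n^'n"
  assumes "(B + t *\<^sub>R mat 1) *v p = - g + r"
  shows "- (g \<bullet> p) = p \<bullet> (B *v p) + t * (norm p)\<^sup>2 - r \<bullet> p"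
proof -
  have "g = r - B *v p - t *\<^sub>R p"
    using assms unfolding regularized_matrix_vector_mult by (simp add: algebra_simps)
  then have "p \<bullet> g = p \<bullet> r - p \<bullet> (B *v p) - t * (p \<bullet> p)"
    by (simp add: inner_diff_right)
  then show ?thesis
    by (simp add: inner_commute power2_norm_eq_inner)
qed

lemma qmodel_decrease_regularized_step:
  fixes B :: "real^'n^'n"
  assumes p_eq: "(B + t *\<^sub>R mat 1) *v p = - g + r"
    and psd: "p \<bullet> (B *v p) \<ge> 0"
    and curv: "(1/2) * (p \<bullet> (B *v p)) + t * (norm p)\<^sup>2 \<ge> lam1 * (norm p)\<^sup>2"
    and a: "0 \<le> a" "a \<le> 1"
  shows "qmodel c g B 0 - qmodel c g B (a *\<^sub>R p) \<ge> a * (lam1 * (norm p)\<^sup>2 - norm r * norm p)"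
proof -
  have "a * (lam1 * (norm p)\<^sup>2 - norm r * norm p)
      \<le> a * ((1/2) * (p \<bullet> (B *v p)) + t * (norm p)\<^sup>2 - norm r * norm p)"
    using a curv by (intro mult_left_mono) auto
  also have "\<dots> \<le> a * (p \<bullet> (B *v p) + t * (norm p)\<^sup>2 - r \<bullet> p) - a\<^sup>2 / 2 * (p \<bullet> (B *v p))"
  proof -
    have "a\<^sup>2 * (p \<bullet> (B *v p)) \<le> a * (p \<bullet> (B *v p))"
      using a psd by (intro mult_right_mono) (auto simp: power2_eq_square mult_left_le_one_le)
    moreover have "a * (r \<bullet> p) \<le> a * (norm r * norm p)"
      using a by (intro mult_left_mono norm_cauchy_schwarz)
    ultimately show ?thesis
      by (simp add: algebra_simps)
  qed
  also have "\<dots> = a * - (g \<bullet> p) - a\<^sup>2 / 2 * (p \<bullet> (B *v p))"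
    by (simp only: inner_regularized_residual[OF p_eq])
  also have "\<dots> = qmodel c g B 0 - qmodel c g B (a *\<^sub>R p)"
    by (simp add: qmodel_decrease_scaled)
  finally show ?thesis .
qed

lemma residual_step_norm_bound:
  fixes B :: "real^'n^'n"
  assumes "onorm (\<lambda>h. (B + t *\<^sub>R mat 1) *v h) \<le> lam2"
    and "(B + t *\<^sub>R mat 1) *v p = - g + r"
  shows "norm g \<le> lam2 * norm p + norm r"
proof -
  have "g = r - (B + t *\<^sub>R mat 1) *v p"
    using assms(2) by (simp add: algebra_simps)
  then have "norm g \<le> norm r + norm ((B + t *\<^sub>R mat 1) *v p)"
    by (metis norm_triangle_ineq4)
  then show ?thesis
    using norm_matrix_vector_le_onorm[OF assms(1), of p] by linarith
qed

lemma step_length_lower_bound: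
  fixes l1 l2 G P R :: real
  assumes l1: "l1 > 0" and l2: "l2 > 0"
    and G: "G \<le> l2 * P + R" and R: "R \<le> l1 / (2 * (l1 + l2)) * G"
  shows "(l1 + 2 * l2) / (2 * l2 * (l1 + l2)) * G \<le> P"
proof -
  have pos: "2 * (l1 + l2) > 0" using l1 l2 by simp
  have "2 * (l1 + l2) * G \<le> 2 * (l1 + l2) * (l2 * P + R)"
    using G pos by (intro mult_left_mono) auto
  moreover have "2 * (l1 + l2) * R \<le> l1 * G"
    using mult_left_mono[OF R, of "2 * (l1 + l2)"] pos by simp
  ultimately have "(l1 + 2 * l2) * G \<le> (2 * l2 * (l1 + l2)) * P"
    by (simp add: algebra_simps)
  moreover have "2 * l2 * (l1 + l2) > 0" using l1 l2 by simp
  ultimately show ?thesis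
    by (simp add: pos_divide_le_eq mult.commute)
qed

lemma curvature_minus_residual_lower_bound:
  fixes l1 l2 G P R :: real
  assumes l1: "l1 > 0" and l2: "l2 > 0"
    and P: "(l1 + 2 * l2) / (2 * l2 * (l1 + l2)) * G \<le> P" and R: "R \<le> l1 / (2 * (l1 + l2)) * G"
  shows "l1 / (2 * l2) * G \<le> l1 * P - R"
proof -
  have "l1 + l2 > 0" using l1 l2 by simp
  then have "(l1 + 2 * l2) / (2 * l2 * (l1 + l2)) = 1 / (2 * l2) + 1 / (2 * (l1 + l2))"
    using l2 by (simp add: field_split_simps)
  then have "l1 / (2 * l2) * G = l1 * ((l1 + 2 * l2) / (2 * l2 * (l1 + l2)) * G) - l1 / (2 * (l1 + l2)) * G"
    by (simp add: algebra_simps)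
  also have "\<dots> \<le> l1 * P - R"
    using l1 P R mult_left_mono[OF P, of l1] by linarith
  finally show ?thesis .
qed

theorem lemmaB1:
  fixes g p r :: "real^'n" and B :: "real^'n^'n" and c \<Delta> t lam1 lam2 :: real
  assumes Delta_pos: "\<Delta> > 0"
    and B_psd: "\<forall>h. h \<bullet> (B *v h) \<ge> 0"
    and t_nonneg: "t \<ge> 0"
    and lam1_pos: "lam1 > 0" and lam2_pos: "lam2 > 0"
    and lam1_bound: "\<forall>h. (1/2) * (h \<bullet> (B *v h)) + t * (norm h)^2 \<ge> lam1 * (norm h)^2"
    and lam2_bound: "onorm (\<lambda>h. (B + t *\<^sub>R mat 1) *v h) \<le> lam2"
    and p_eq: "(B + t *\<^sub>R mat 1) *v p = - g + r"
    and r_bound: "norm r \<le> lam1 / (2 * (lam1 + lam2)) * norm g"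
  shows "let s = (min \<Delta> (norm p) / norm p) *\<^sub>R p;
             gamma1 = lam1 / (2 * lam2);
             gamma2 = (lam1 + 2 * lam2) / (2 * lam2 * (lam1 + lam2))
         in qmodel c g B 0 - qmodel c g B s \<ge> gamma1 / 2 * norm g * min \<Delta> (gamma2 * norm g)"
proof -
  define a where "a = min \<Delta> (norm p) / norm p"
  define gamma1 where "gamma1 = lam1 / (2 * lam2)"
  define gamma2 where "gamma2 = (lam1 + 2 * lam2) / (2 * lam2 * (lam1 + lam2))"
  have step_long: "gamma2 * norm g \<le> norm p"
    unfolding gamma2_def using residual_step_norm_bound[OF lam2_bound p_eq]
    by (rule step_length_lower_bound[OF lam1_pos lam2_pos _ r_bound])
  have model_gain: "gamma1 * norm g \<le> lam1 * norm p - norm r"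
    unfolding gamma1_def using step_long[unfolded gamma2_def]
    by (rule curvature_minus_residual_lower_bound[OF lam1_pos lam2_pos _ r_bound])
  have a_bounds: "0 \<le> a" "a \<le> 1"
    using Delta_pos by (auto simp: a_def min_def)
  \<comment> \<open>includes p = 0, where a = 0 since x / 0 = 0\<close>
  have a_norm: "a * norm p = min \<Delta> (norm p)"
    using Delta_pos by (cases "p = 0") (auto simp: a_def)
  have nonneg: "0 \<le> gamma1 * norm g" "0 \<le> min \<Delta> (gamma2 * norm g)"
    using Delta_pos lam1_pos lam2_pos by (auto simp: gamma1_def gamma2_def)
  have "gamma1 / 2 * norm g * min \<Delta> (gamma2 * norm g) \<le> min \<Delta> (gamma2 * norm g) * (gamma1 * norm g)"
    using mult_nonneg_nonneg[OF nonneg(2,1)] by (simp add: algebra_simps)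
  also have "\<dots> \<le> min \<Delta> (norm p) * (lam1 * norm p - norm r)"
    using step_long model_gain nonneg by (intro mult_mono) auto
  also have "\<dots> = a * (lam1 * (norm p)\<^sup>2 - norm r * norm p)"
    by (simp flip: a_norm add: power2_eq_square algebra_simps)
  also have "\<dots> \<le> qmodel c g B 0 - qmodel c g B (a *\<^sub>R p)"
    using B_psd lam1_bound a_bounds by (intro qmodel_decrease_regularized_step[OF p_eq]) auto
  finally show ?thesis
    unfolding Let_def a_def gamma1_def gamma2_def .
qed

end
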